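(* Let $G$ be a right $\ell$-group with a strong order unit $s$, and let $g \in G^-$. Put $k = \min\{ i \geq 0 : g \geq s^{-i}\}$. Then $g$ has a unique left-normal factorization $g = h_1 h_2 \cdots h_k$. Its factors are \[ h_i = (g \curlyvee s^{-(i-1)})^{-1}(g \curlyvee s^{-i}) \qquad (1 \leq i \leq k), \] where $a \curlyvee b := (a^{-1} \wedge b^{-1})^{-1}$.
   Context: A right $\ell$-group is a group $G$ (identity $e$) with a partial order $\leq$ that is right-invariant ($x \leq y \Rightarrow xz \leq yz$) and under which $G$ is a lattice with meet $\wedge$ and join $\vee$. $G^- := \{g \in G : g \leq e\}$, and $[a,b] := \{x : a \leq x \leq b\}$. An element $s$ is normal if $x \mapsto sx$ is a lattice automorphism of $G$. It is a strong order unit if $s > e$, $s$ is normal, and every $g \in G$ satisfies $g \leq s^k$ for some $k \in \mathbb{Z}$. For $g \in G^-$, a left-normal factorization of $g$ is a finite sequence $h_1,\dots,h_k \in [s^{-1},e]$ satisfying three conditions: (1) $g = h_1 \cdots h_{k-1} h_k$; (2) $h_i \neq e$ for all $i$; (3) for each $1 \leq i < k$ there do not exist $h,h' \in G^-$ with $h \neq e$, $hh' = h_{i+1}$ and $h_i h \in [s^{-1},e]$. *)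

theory Defs
  imports "HOL-Algebra.Group"
begin

definition is_glb :: "('a, 'b) monoid_scheme \<Rightarrow> ('a \<Rightarrow> 'a \<Rightarrow> bool) \<Rightarrow> 'a \<Rightarrow> 'a \<Rightarrow> 'a \<Rightarrow> bool" where
  "is_glb G leq x y z \<longleftrightarrow> z \<in> carrier G \<and> leq z x \<and> leq z y \<and>
     (\<forall>w\<in>carrier G. leq w x \<and> leq w y \<longrightarrow> leq w z)"

definition is_lub :: "('a, 'b) monoid_scheme \<Rightarrow> ('a \<Rightarrow> 'a \<Rightarrow> bool) \<Rightarrow> 'a \<Rightarrow> 'a \<Rightarrow> 'a \<Rightarrow> bool" where
  "is_lub G leq x y z \<longleftrightarrow> z \<in> carrier G \<and> leq x z \<and> leq y z \<and>
     (\<forall>w\<in>carrier G. leq x w \<and> leq y w \<longrightarrow> leq z w)"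

definition right_lgroup :: "('a, 'b) monoid_scheme \<Rightarrow> ('a \<Rightarrow> 'a \<Rightarrow> bool) \<Rightarrow> bool" where
  "right_lgroup G leq \<longleftrightarrow> group G \<and>
     (\<forall>x\<in>carrier G. leq x x) \<and>
     (\<forall>x\<in>carrier G. \<forall>y\<in>carrier G. leq x y \<and> leq y x \<longrightarrow> x = y) \<and>
     (\<forall>x\<in>carrier G. \<forall>y\<in>carrier G. \<forall>z\<in>carrier G. leq x y \<and> leq y z \<longrightarrow> leq x z) \<and>
     (\<forall>x\<in>carrier G. \<forall>y\<in>carrier G. \<forall>z\<in>carrier G. leq x y \<longrightarrow> leq (x \<otimes>\<^bsub>G\<^esub> z) (y \<otimes>\<^bsub>G\<^esub> z)) \<and>
     (\<forall>x\<in>carrier G. \<forall>y\<in>carrier G. (\<exists>z. is_glb G leq x y z) \<and> (\<exists>z. is_lub G leq x y z))"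

definition lmeet :: "('a, 'b) monoid_scheme \<Rightarrow> ('a \<Rightarrow> 'a \<Rightarrow> bool) \<Rightarrow> 'a \<Rightarrow> 'a \<Rightarrow> 'a" where
  "lmeet G leq x y = (THE z. is_glb G leq x y z)"

definition ljoin :: "('a, 'b) monoid_scheme \<Rightarrow> ('a \<Rightarrow> 'a \<Rightarrow> bool) \<Rightarrow> 'a \<Rightarrow> 'a \<Rightarrow> 'a" where
  "ljoin G leq x y = (THE z. is_lub G leq x y z)"

definition cvee :: "('a, 'b) monoid_scheme \<Rightarrow> ('a \<Rightarrow> 'a \<Rightarrow> bool) \<Rightarrow> 'a \<Rightarrow> 'a \<Rightarrow> 'a" where
  "cvee G leq a b = inv\<^bsub>G\<^esub> (lmeet G leq (inv\<^bsub>G\<^esub> a) (inv\<^bsub>G\<^esub> b))"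

definition normal_elem :: "('a, 'b) monoid_scheme \<Rightarrow> ('a \<Rightarrow> 'a \<Rightarrow> bool) \<Rightarrow> 'a \<Rightarrow> bool" where
  "normal_elem G leq s \<longleftrightarrow> s \<in> carrier G \<and>
     bij_betw (\<lambda>x. s \<otimes>\<^bsub>G\<^esub> x) (carrier G) (carrier G) \<and>
     (\<forall>x\<in>carrier G. \<forall>y\<in>carrier G.
        s \<otimes>\<^bsub>G\<^esub> lmeet G leq x y = lmeet G leq (s \<otimes>\<^bsub>G\<^esub> x) (s \<otimes>\<^bsub>G\<^esub> y) \<and>
        s \<otimes>\<^bsub>G\<^esub> ljoin G leq x y = ljoin G leq (s \<otimes>\<^bsub>G\<^esub> x) (s \<otimes>\<^bsub>G\<^esub> y))"

definition strong_order_unit :: "('a, 'b) monoid_scheme \<Rightarrow> ('a \<Rightarrow> 'a \<Rightarrow> bool) \<Rightarrow> 'a \<Rightarrow> bool" where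
  "strong_order_unit G leq s \<longleftrightarrow> s \<in> carrier G \<and>
     leq \<one>\<^bsub>G\<^esub> s \<and> s \<noteq> \<one>\<^bsub>G\<^esub> \<and> normal_elem G leq s \<and>
     (\<forall>g\<in>carrier G. \<exists>k::int. leq g (s [^]\<^bsub>G\<^esub> k))"

definition neg_cone :: "('a, 'b) monoid_scheme \<Rightarrow> ('a \<Rightarrow> 'a \<Rightarrow> bool) \<Rightarrow> 'a set" where
  "neg_cone G leq = {g \<in> carrier G. leq g \<one>\<^bsub>G\<^esub>}"

definition interv :: "('a, 'b) monoid_scheme \<Rightarrow> ('a \<Rightarrow> 'a \<Rightarrow> bool) \<Rightarrow> 'a \<Rightarrow> 'a \<Rightarrow> 'a set" where
  "interv G leq a b = {x \<in> carrier G. leq a x \<and> leq x b}"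

definition lprod :: "('a, 'b) monoid_scheme \<Rightarrow> 'a list \<Rightarrow> 'a" where
  "lprod G hs = foldr (\<lambda>h acc. h \<otimes>\<^bsub>G\<^esub> acc) hs \<one>\<^bsub>G\<^esub>"

text \<open>Left-normal factorization h_1,...,h_k (list hs, h_i = hs ! (i-1)) of g w.r.t. s.\<close>
definition left_normal_fact :: "('a, 'b) monoid_scheme \<Rightarrow> ('a \<Rightarrow> 'a \<Rightarrow> bool) \<Rightarrow> 'a \<Rightarrow> 'a \<Rightarrow> 'a list \<Rightarrow> bool" where
  "left_normal_fact G leq s g hs \<longleftrightarrow>
     set hs \<subseteq> interv G leq (inv\<^bsub>G\<^esub> s) \<one>\<^bsub>G\<^esub> \<and>
     g = lprod G hs \<and>
     (\<forall>h\<in>set hs. h \<noteq> \<one>\<^bsub>G\<^esub>) \<and>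
     (\<forall>i. i + 1 < length hs \<longrightarrow>
        \<not> (\<exists>h\<in>neg_cone G leq. \<exists>h'\<in>neg_cone G leq. h \<noteq> \<one>\<^bsub>G\<^esub> \<and>
              h \<otimes>\<^bsub>G\<^esub> h' = hs ! (i + 1) \<and>
              hs ! i \<otimes>\<^bsub>G\<^esub> h \<in> interv G leq (inv\<^bsub>G\<^esub> s) \<one>\<^bsub>G\<^esub>))"

end

theory Submission
  imports Defs
begin

(* Put p = g^-1 and a_j = p \<and> s^j. Because left multiplication by s is a lattice automorphism,
   a_(j+1) = p \<and> s a_j, so the a_j increase strictly from a_0 = e until they reach p at j = k and
   are constant afterwards. The quotients a_(j-1) a_j^-1 lie in [s^-1, e], differ from e and
   telescope to g; they form a left-normal factorization.
   Conversely, condition (3) on consecutive factors h, h' says exactly h'^-1 \<and> s h = e. For any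
   factorization with this property (h_(j+1) ... h_k)^-1 \<and> s = h_(j+1)^-1, and by induction on j
   this forces (h_1 ... h_j)^-1 = a_j. So every left-normal factorization is the telescoping one,
   and g \<curlyvee> s^-j = a_j^-1 turns its factors into the stated formula. *)

context monoid
begin

lemma lprod_Nil [simp]: "lprod G [] = \<one>"
  by (simp add: lprod_def)

lemma lprod_Cons [simp]: "lprod G (x # xs) = x \<otimes> lprod G xs"
  by (simp add: lprod_def)

lemma lprod_closed [simp]: "set xs \<subseteq> carrier G \<Longrightarrow> lprod G xs \<in> carrier G"
  by (induction xs) auto

lemma lprod_append:
  "set xs \<subseteq> carrier G \<Longrightarrow> set ys \<subseteq> carrier G \<Longrightarrow> lprod G (xs @ ys) = lprod G xs \<otimes> lprod G ys"
  by (induction xs) (auto simp: m_assoc)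

lemma lprod_take_drop:
  "set xs \<subseteq> carrier G \<Longrightarrow> lprod G xs = lprod G (take j xs) \<otimes> lprod G (drop j xs)"
  using lprod_append[of "take j xs" "drop j xs"]
  by (metis append_take_drop_id set_drop_subset set_take_subset subset_trans)

lemma lprod_take_Suc:
  assumes "set xs \<subseteq> carrier G" and "j < length xs"
  shows "lprod G (take (Suc j) xs) = lprod G (take j xs) \<otimes> xs ! j"
proof -
  have "take (Suc j) xs = take j xs @ [xs ! j]"
    using assms(2) by (simp add: take_Suc_conv_app_nth)
  moreover have "set (take j xs) \<subseteq> carrier G" and "xs ! j \<in> carrier G"
    using assms by (auto dest: in_set_takeD)
  ultimately show ?thesis
    by (simp add: lprod_append)
qed

end

lemma (in group) lprod_telescope:
  assumes "\<And>i. f i \<in> carrier G"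
  shows "lprod G (map (\<lambda>i. f i \<otimes> inv (f (Suc i))) [m..<m + d]) = f m \<otimes> inv (f (m + d))"
proof (induction d arbitrary: m)
  case 0
  show ?case using assms by simp
next
  case (Suc d)
  have "[m..<m + Suc d] = m # [Suc m..<Suc m + d]"
    by (simp add: upt_conv_Cons)
  then have "lprod G (map (\<lambda>i. f i \<otimes> inv (f (Suc i))) [m..<m + Suc d])
      = f m \<otimes> inv (f (Suc m)) \<otimes> (f (Suc m) \<otimes> inv (f (Suc m + d)))"
    using Suc[of "Suc m"] by (simp del: upt_Suc)
  also have "\<dots> = f m \<otimes> inv (f (m + Suc d))"
    using assms by (simp add: m_assoc[symmetric]) (simp add: m_assoc)
  finally show ?case .
qed

locale right_lgroup_on = group G for G :: "('a, 'b) monoid_scheme" (structure) +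
  fixes leq :: "'a \<Rightarrow> 'a \<Rightarrow> bool" (infix "\<preceq>" 50)
  assumes right_lgroup: "right_lgroup G leq"
begin

abbreviation meet :: "'a \<Rightarrow> 'a \<Rightarrow> 'a" (infixl "\<curlywedge>" 70)
  where "x \<curlywedge> y \<equiv> lmeet G leq x y"

lemma le_refl: "x \<in> carrier G \<Longrightarrow> x \<preceq> x"
  using right_lgroup unfolding right_lgroup_def by blast

lemma le_antisym: "\<lbrakk>x \<in> carrier G; y \<in> carrier G; x \<preceq> y; y \<preceq> x\<rbrakk> \<Longrightarrow> x = y"
  using right_lgroup unfolding right_lgroup_def by blast

lemma le_trans:
  "\<lbrakk>x \<in> carrier G; y \<in> carrier G; z \<in> carrier G; x \<preceq> y; y \<preceq> z\<rbrakk> \<Longrightarrow> x \<preceq> z"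
  using right_lgroup unfolding right_lgroup_def by blast

lemma le_mult_right:
  "\<lbrakk>x \<in> carrier G; y \<in> carrier G; z \<in> carrier G; x \<preceq> y\<rbrakk> \<Longrightarrow> x \<otimes> z \<preceq> y \<otimes> z"
  using right_lgroup unfolding right_lgroup_def by blast

lemma le_mult_right_iff:
  assumes "x \<in> carrier G" "y \<in> carrier G" "z \<in> carrier G"
  shows "x \<otimes> z \<preceq> y \<otimes> z \<longleftrightarrow> x \<preceq> y"
proof
  assume "x \<otimes> z \<preceq> y \<otimes> z"
  then show "x \<preceq> y"
    using le_mult_right[of "x \<otimes> z" "y \<otimes> z" "inv z"] assms by (simp add: m_assoc)
qed (rule le_mult_right[OF assms])

lemma le_iff_mult_inv_le_one: "x \<in> carrier G \<Longrightarrow> y \<in> carrier G \<Longrightarrow> x \<preceq> y \<longleftrightarrow> x \<otimes> inv y \<preceq> \<one>"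
  using le_mult_right_iff[of x y "inv y"] by simp

lemma le_iff_one_le_mult_inv: "x \<in> carrier G \<Longrightarrow> y \<in> carrier G \<Longrightarrow> x \<preceq> y \<longleftrightarrow> \<one> \<preceq> y \<otimes> inv x"
  using le_mult_right_iff[of x y "inv x"] by simp

lemma one_le_inv_iff: "x \<in> carrier G \<Longrightarrow> \<one> \<preceq> inv x \<longleftrightarrow> x \<preceq> \<one>"
  using le_iff_one_le_mult_inv[of x \<one>] by simp

lemma meet_is_glb: "x \<in> carrier G \<Longrightarrow> y \<in> carrier G \<Longrightarrow> is_glb G leq x y (x \<curlywedge> y)"
proof -
  assume "x \<in> carrier G" "y \<in> carrier G"
  then have "\<exists>z. is_glb G leq x y z"
    using right_lgroup unfolding right_lgroup_def by blast
  moreover have "z = z'" if "is_glb G leq x y z" "is_glb G leq x y z'" for z z'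
    using that unfolding is_glb_def by (meson le_antisym)
  ultimately show ?thesis
    unfolding lmeet_def by (metis theI)
qed

lemma meet_closed [simp]: "x \<in> carrier G \<Longrightarrow> y \<in> carrier G \<Longrightarrow> x \<curlywedge> y \<in> carrier G"
  using meet_is_glb unfolding is_glb_def by blast

lemma meet_le_left: "x \<in> carrier G \<Longrightarrow> y \<in> carrier G \<Longrightarrow> x \<curlywedge> y \<preceq> x"
  using meet_is_glb unfolding is_glb_def by blast

lemma meet_le_right: "x \<in> carrier G \<Longrightarrow> y \<in> carrier G \<Longrightarrow> x \<curlywedge> y \<preceq> y"
  using meet_is_glb unfolding is_glb_def by blast

lemma meet_greatest:
  "\<lbrakk>x \<in> carrier G; y \<in> carrier G; w \<in> carrier G; w \<preceq> x; w \<preceq> y\<rbrakk> \<Longrightarrow> w \<preceq> x \<curlywedge> y"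
  using meet_is_glb unfolding is_glb_def by blast

lemma meet_eqI:
  assumes "x \<in> carrier G" "y \<in> carrier G" "z \<in> carrier G" "z \<preceq> x" "z \<preceq> y"
    and "\<And>w. \<lbrakk>w \<in> carrier G; w \<preceq> x; w \<preceq> y\<rbrakk> \<Longrightarrow> w \<preceq> z"
  shows "x \<curlywedge> y = z"
  using assms meet_greatest[of x y z] meet_le_left[of x y] meet_le_right[of x y]
    le_antisym[of "x \<curlywedge> y" z]
  by simp

lemma meet_absorb: "x \<in> carrier G \<Longrightarrow> y \<in> carrier G \<Longrightarrow> x \<preceq> y \<Longrightarrow> x \<curlywedge> y = x"
  by (rule meet_eqI) (auto intro: le_refl)

lemma meet_eq_left_iff: "x \<in> carrier G \<Longrightarrow> y \<in> carrier G \<Longrightarrow> x \<curlywedge> y = x \<longleftrightarrow> x \<preceq> y"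
  by (metis meet_absorb meet_le_right)

lemma meet_commute: "x \<in> carrier G \<Longrightarrow> y \<in> carrier G \<Longrightarrow> x \<curlywedge> y = y \<curlywedge> x"
  by (rule meet_eqI) (auto intro: meet_le_left meet_le_right meet_greatest)

lemma meet_assoc:
  assumes x: "x \<in> carrier G" and y: "y \<in> carrier G" and z: "z \<in> carrier G"
  shows "x \<curlywedge> y \<curlywedge> z = x \<curlywedge> (y \<curlywedge> z)"
proof (rule meet_eqI[symmetric])
  let ?m = "x \<curlywedge> y \<curlywedge> z"
  have m: "?m \<in> carrier G" "?m \<preceq> x \<curlywedge> y" "?m \<preceq> z"
    using x y z by (simp_all add: meet_le_left meet_le_right)
  show "?m \<preceq> x"
    using le_trans[OF m(1) _ x m(2) meet_le_left[OF x y]] x y by simp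
  have "?m \<preceq> y"
    using le_trans[OF m(1) _ y m(2) meet_le_right[OF x y]] x y by simp
  then show "?m \<preceq> y \<curlywedge> z"
    using meet_greatest[OF y z m(1)] m(3) by simp
  fix w assume w: "w \<in> carrier G" "w \<preceq> x" "w \<preceq> y \<curlywedge> z"
  have "w \<preceq> y" "w \<preceq> z"
    using le_trans[OF w(1) _ y w(3) meet_le_left[OF y z]]
      le_trans[OF w(1) _ z w(3) meet_le_right[OF y z]] y z by simp_all
  then show "w \<preceq> ?m"
    using meet_greatest[OF meet_closed[OF x y] z w(1) meet_greatest[OF x y w(1) w(2)]] by simp
qed (use x y z in simp_all)

lemma meet_mult_right:
  assumes "x \<in> carrier G" "y \<in> carrier G" "z \<in> carrier G"
  shows "(x \<otimes> z) \<curlywedge> (y \<otimes> z) = (x \<curlywedge> y) \<otimes> z"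
proof (rule meet_eqI)
  fix w assume w: "w \<in> carrier G" "w \<preceq> x \<otimes> z" "w \<preceq> y \<otimes> z"
  have below: "w \<preceq> v \<otimes> z \<longleftrightarrow> w \<otimes> inv z \<preceq> v" if "v \<in> carrier G" for v
    using le_mult_right_iff[of "w \<otimes> inv z" v z] that w(1) assms(3) by (simp add: m_assoc)
  show "w \<preceq> (x \<curlywedge> y) \<otimes> z"
    using w assms by (simp add: below meet_greatest)
qed (use assms in \<open>auto simp: le_mult_right_iff meet_le_left meet_le_right\<close>)

definition left_meet_hom :: "'a \<Rightarrow> bool" where
  "left_meet_hom c \<longleftrightarrow> c \<in> carrier G \<and>
     (\<forall>x\<in>carrier G. \<forall>y\<in>carrier G. c \<otimes> (x \<curlywedge> y) = (c \<otimes> x) \<curlywedge> (c \<otimes> y))"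

lemma left_meet_hom_one: "left_meet_hom \<one>"
  unfolding left_meet_hom_def by simp

lemma left_meet_hom_mult: "left_meet_hom c \<Longrightarrow> left_meet_hom d \<Longrightarrow> left_meet_hom (c \<otimes> d)"
  unfolding left_meet_hom_def by (simp add: m_assoc)

lemma left_meet_hom_pow: "left_meet_hom c \<Longrightarrow> left_meet_hom (c [^] (n::nat))"
  by (induction n) (simp_all add: left_meet_hom_one left_meet_hom_mult)

lemma left_meet_hom_inv:
  assumes "left_meet_hom c"
  shows "left_meet_hom (inv c)"
  unfolding left_meet_hom_def
proof (intro conjI ballI)
  have c: "c \<in> carrier G"
    using assms left_meet_hom_def by auto
  then show "inv c \<in> carrier G" by simp
  fix x y assume xy: "x \<in> carrier G" "y \<in> carrier G"
  have "c \<otimes> ((inv c \<otimes> x) \<curlywedge> (inv c \<otimes> y)) = x \<curlywedge> y"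
    using assms xy c unfolding left_meet_hom_def by (simp add: m_assoc[symmetric])
  then show "inv c \<otimes> (x \<curlywedge> y) = (inv c \<otimes> x) \<curlywedge> (inv c \<otimes> y)"
    using xy c by (metis inv_solve_left meet_closed m_closed inv_closed)
qed

lemma left_meet_hom_mono:
  "\<lbrakk>left_meet_hom c; x \<in> carrier G; y \<in> carrier G; x \<preceq> y\<rbrakk> \<Longrightarrow> c \<otimes> x \<preceq> c \<otimes> y"
  unfolding left_meet_hom_def by (metis meet_eq_left_iff m_closed)

lemma left_meet_hom_le_iff:
  assumes "left_meet_hom c" "x \<in> carrier G" "y \<in> carrier G"
  shows "c \<otimes> x \<preceq> c \<otimes> y \<longleftrightarrow> x \<preceq> y"
proof
  have c: "c \<in> carrier G"
    using assms left_meet_hom_def by auto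
  assume "c \<otimes> x \<preceq> c \<otimes> y"
  then show "x \<preceq> y"
    using left_meet_hom_mono[OF left_meet_hom_inv[OF assms(1)], of "c \<otimes> x" "c \<otimes> y"] assms c
    by (simp add: m_assoc[symmetric])
qed (use assms in \<open>rule left_meet_hom_mono\<close>)

lemma inv_le_iff_one_le_mult:
  assumes "left_meet_hom c" "x \<in> carrier G"
  shows "inv c \<preceq> x \<longleftrightarrow> \<one> \<preceq> c \<otimes> x"
proof -
  have "c \<in> carrier G"
    using assms left_meet_hom_def by auto
  then show ?thesis
    using left_meet_hom_le_iff[of c "inv c" x] assms by simp
qed

end

locale strong_unit_lgroup = right_lgroup_on +
  fixes s :: 'a
  assumes strong_order_unit: "strong_order_unit G leq s"
begin

lemma s_closed [simp]: "s \<in> carrier G"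
  using strong_order_unit unfolding strong_order_unit_def by auto

lemma one_le_s: "\<one> \<preceq> s"
  using strong_order_unit unfolding strong_order_unit_def by auto

lemma left_meet_hom_s: "left_meet_hom s"
  using strong_order_unit unfolding strong_order_unit_def normal_elem_def left_meet_hom_def by auto

lemma pow_mono: "i \<le> j \<Longrightarrow> s [^] (i::nat) \<preceq> s [^] j"
proof (induction j rule: dec_induct)
  case base
  then show ?case by (simp add: le_refl)
next
  case (step j)
  have "s [^] j \<preceq> s [^] Suc j"
    using le_mult_right[OF one_closed s_closed _ one_le_s, of "s [^] j"]
    by (simp add: nat_pow_Suc2[OF s_closed, symmetric])
  then show ?case
    using step.IH le_trans by (meson nat_pow_closed s_closed)
qed

lemma ex_le_pow: "x \<in> carrier G \<Longrightarrow> \<exists>n::nat. x \<preceq> s [^] n"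
proof -
  assume x: "x \<in> carrier G"
  then obtain k :: int where k: "x \<preceq> s [^] k"
    using strong_order_unit unfolding strong_order_unit_def by blast
  show ?thesis
  proof (cases "k \<ge> 0")
    case True
    then have "s [^] k = s [^] int (nat k)"
      by simp
    also have "\<dots> = s [^] nat k"
      by (rule int_pow_int)
    finally show ?thesis
      using k by metis
  next
    case False
    then have "s [^] k = s [^] (- int (nat (- k)))"
      by simp
    also have "\<dots> = inv (s [^] nat (- k))"
      by (rule int_pow_neg_int[OF s_closed])
    finally have "s [^] k = inv (s [^] nat (- k))" .
    moreover have "inv (s [^] nat (- k)) \<preceq> \<one>"
      using pow_mono[of 0 "nat (- k)"] one_le_inv_iff[of "inv (s [^] nat (- k))"] by simp
    ultimately have "x \<preceq> s [^] (0::nat)"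
      using k x le_trans[of x "s [^] k" \<one>] by simp
    then show ?thesis ..
  qed
qed

lemma inv_pow_le_iff: "x \<in> carrier G \<Longrightarrow> inv (s [^] (n::nat)) \<preceq> x \<longleftrightarrow> inv x \<preceq> s [^] n"
  using inv_le_iff_one_le_mult[OF left_meet_hom_pow[OF left_meet_hom_s], of x n]
    le_iff_one_le_mult_inv[of "inv x" "s [^] n"]
  by simp

abbreviation unit_interval :: "'a set"
  where "unit_interval \<equiv> interv G leq (inv s) \<one>"

lemma unit_interval_iff: "h \<in> unit_interval \<longleftrightarrow> h \<in> carrier G \<and> h \<preceq> \<one> \<and> \<one> \<preceq> s \<otimes> h"
  unfolding interv_def using inv_le_iff_one_le_mult[OF left_meet_hom_s] by auto

text \<open>Lattice form of condition (3) for consecutive factors h1, h2: writing x = h^-1, the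
  refinements h forbidden there are the x with e < x \<le> h2^-1 \<and> s h1
  (\<open>exists_refinement_iff\<close>), so there are none iff that meet is e.\<close>

definition normal_pair :: "'a \<Rightarrow> 'a \<Rightarrow> bool" where
  "normal_pair h1 h2 \<longleftrightarrow> inv h2 \<curlywedge> (s \<otimes> h1) = \<one>"

lemma left_divisor_in_neg_cone_iff:
  assumes "h \<in> carrier G" "h2 \<in> carrier G"
  shows "(\<exists>h'\<in>neg_cone G leq. h \<otimes> h' = h2) \<longleftrightarrow> inv h \<preceq> inv h2"
proof -
  have "h \<otimes> h' = h2 \<longleftrightarrow> h' = inv h \<otimes> h2" if "h' \<in> carrier G" for h'
    using that assms inv_solve_left[of h' h h2] by auto
  then have "(\<exists>h'\<in>neg_cone G leq. h \<otimes> h' = h2) \<longleftrightarrow> inv h \<otimes> h2 \<preceq> \<one>"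
    unfolding neg_cone_def using assms by auto
  also have "\<dots> \<longleftrightarrow> inv h \<preceq> inv h2"
    using le_iff_mult_inv_le_one[of "inv h" "inv h2"] assms by simp
  finally show ?thesis .
qed

lemma mult_mem_unit_interval_iff:
  assumes "h1 \<in> carrier G" "h \<in> carrier G"
  shows "h1 \<otimes> h \<in> unit_interval \<longleftrightarrow> h1 \<preceq> inv h \<and> inv h \<preceq> s \<otimes> h1"
  using assms le_iff_mult_inv_le_one[of h1 "inv h"] le_iff_one_le_mult_inv[of "inv h" "s \<otimes> h1"]
  by (simp add: unit_interval_iff m_assoc)

lemma exists_refinement_iff:
  assumes "h1 \<in> carrier G" "h1 \<preceq> \<one>" "h2 \<in> carrier G"
  shows "(\<exists>h\<in>neg_cone G leq. \<exists>h'\<in>neg_cone G leq. h \<noteq> \<one> \<and> h \<otimes> h' = h2 \<and> h1 \<otimes> h \<in> unit_interval)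
    \<longleftrightarrow> (\<exists>x\<in>carrier G. x \<noteq> \<one> \<and> \<one> \<preceq> x \<and> x \<preceq> inv h2 \<and> x \<preceq> s \<otimes> h1)"
    (is "?refinement \<longleftrightarrow> ?between")
proof -
  have conditions: "(h \<in> neg_cone G leq \<and> (\<exists>h'\<in>neg_cone G leq. h \<otimes> h' = h2) \<and> h1 \<otimes> h \<in> unit_interval)
      \<longleftrightarrow> \<one> \<preceq> inv h \<and> inv h \<preceq> inv h2 \<and> inv h \<preceq> s \<otimes> h1"
    if "h \<in> carrier G" for h
  proof -
    have "h \<in> neg_cone G leq \<longleftrightarrow> \<one> \<preceq> inv h"
      using that by (simp add: neg_cone_def one_le_inv_iff)
    moreover have "\<one> \<preceq> inv h \<Longrightarrow> h1 \<preceq> inv h"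
      using that assms le_trans[of h1 \<one> "inv h"] by simp
    ultimately show ?thesis
      using left_divisor_in_neg_cone_iff[OF that assms(3)] mult_mem_unit_interval_iff[OF assms(1) that]
      by blast
  qed
  show ?thesis
  proof
    assume ?refinement
    then obtain h where "h \<in> carrier G" "h \<noteq> \<one>" "h \<in> neg_cone G leq"
      "\<exists>h'\<in>neg_cone G leq. h \<otimes> h' = h2" "h1 \<otimes> h \<in> unit_interval"
      by (auto simp: neg_cone_def)
    with conditions[of h] show ?between
      by (metis inv_closed inv_eq_1_iff)
  next
    assume ?between
    then obtain x where "x \<in> carrier G" "x \<noteq> \<one>" "\<one> \<preceq> x" "x \<preceq> inv h2" "x \<preceq> s \<otimes> h1"
      by blast
    with conditions[of "inv x"] show ?refinement
      by (metis inv_closed inv_eq_1_iff inv_inv)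
  qed
qed

lemma no_refinement_iff_normal_pair:
  assumes "h1 \<in> unit_interval" "h2 \<in> unit_interval"
  shows "\<not> (\<exists>h\<in>neg_cone G leq. \<exists>h'\<in>neg_cone G leq. h \<noteq> \<one> \<and> h \<otimes> h' = h2 \<and> h1 \<otimes> h \<in> unit_interval)
    \<longleftrightarrow> normal_pair h1 h2"
proof -
  define w where "w = inv h2 \<curlywedge> (s \<otimes> h1)"
  have carrier: "h1 \<in> carrier G" "h2 \<in> carrier G" "w \<in> carrier G"
    using assms by (auto simp: unit_interval_iff w_def)
  have "\<one> \<preceq> w"
    using assms carrier unfolding w_def by (intro meet_greatest) (auto simp: unit_interval_iff one_le_inv_iff)
  then have "(\<exists>x\<in>carrier G. x \<noteq> \<one> \<and> \<one> \<preceq> x \<and> x \<preceq> inv h2 \<and> x \<preceq> s \<otimes> h1) \<longleftrightarrow> w \<noteq> \<one>"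
    using carrier unfolding w_def
    by (metis inv_closed le_antisym m_closed meet_greatest meet_le_left meet_le_right one_closed s_closed)
  then show ?thesis
    using exists_refinement_iff assms carrier by (simp add: unit_interval_iff normal_pair_def w_def)
qed

lemma left_normal_fact_iff:
  "left_normal_fact G leq s g hs \<longleftrightarrow>
     set hs \<subseteq> unit_interval \<and> g = lprod G hs \<and> (\<forall>h\<in>set hs. h \<noteq> \<one>) \<and> successively normal_pair hs"
proof (cases "set hs \<subseteq> unit_interval")
  case True
  then have "\<not> (\<exists>h\<in>neg_cone G leq. \<exists>h'\<in>neg_cone G leq.
          h \<noteq> \<one> \<and> h \<otimes> h' = hs ! (i + 1) \<and> hs ! i \<otimes> h \<in> unit_interval)
      \<longleftrightarrow> normal_pair (hs ! i) (hs ! (i + 1))" if "i + 1 < length hs" for i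
    using that by (intro no_refinement_iff_normal_pair) (auto intro: subsetD nth_mem)
  then show ?thesis
    unfolding left_normal_fact_def successively_conv_nth using True by auto
qed (auto simp: left_normal_fact_def)

lemma inv_lprod_meet_s:
  "\<lbrakk>hs \<noteq> []; set hs \<subseteq> unit_interval; successively normal_pair hs\<rbrakk>
     \<Longrightarrow> inv (lprod G hs) \<curlywedge> s = inv (hd hs)"
proof (induction hs)
  case (Cons h t)
  have h: "h \<in> carrier G" "h \<preceq> \<one>" "\<one> \<preceq> s \<otimes> h"
    using Cons.prems(2) by (auto simp: unit_interval_iff)
  show ?case
  proof (cases t)
    case Nil
    have "inv h \<preceq> s"
      using h le_iff_one_le_mult_inv[of "inv h" s] by simp
    then show ?thesis
      using Nil h meet_absorb[of "inv h" s] by simp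
  next
    case (Cons h2 r)
    have t: "set t \<subseteq> unit_interval" "successively normal_pair t" "normal_pair h h2"
      using Cons.prems Cons by (auto simp: successively_Cons)
    then have "set t \<subseteq> carrier G"
      by (auto simp: unit_interval_iff)
    define q where "q = inv (lprod G t)"
    have q: "q \<in> carrier G"
      unfolding q_def using \<open>set t \<subseteq> carrier G\<close> by simp
    have "s \<otimes> h \<preceq> s"
      using h left_meet_hom_mono[OF left_meet_hom_s, of h \<one>] by simp
    then have "s \<curlywedge> (s \<otimes> h) = s \<otimes> h"
      using h meet_commute[of s "s \<otimes> h"] meet_absorb[of "s \<otimes> h" s] by simp
    then have "q \<curlywedge> (s \<otimes> h) = q \<curlywedge> s \<curlywedge> (s \<otimes> h)"
      using q h meet_assoc[of q s "s \<otimes> h"] by simp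
    also have "\<dots> = inv h2 \<curlywedge> (s \<otimes> h)"
      using Cons.IH t Cons by (simp add: q_def)
    also have "\<dots> = \<one>"
      using t(3) by (simp add: normal_pair_def)
    finally have "q \<curlywedge> (s \<otimes> h) = \<one>" .
    have "inv (lprod G (h # t)) \<curlywedge> s = (q \<otimes> inv h) \<curlywedge> (s \<otimes> h \<otimes> inv h)"
      using h \<open>set t \<subseteq> carrier G\<close> by (simp add: q_def inv_mult_group m_assoc)
    also have "\<dots> = (q \<curlywedge> (s \<otimes> h)) \<otimes> inv h"
      using q h by (simp add: meet_mult_right)
    finally show ?thesis
      using \<open>q \<curlywedge> (s \<otimes> h) = \<one>\<close> h by simp
  qed
qed simp

end

locale strong_unit_lgroup_neg = strong_unit_lgroup +
  fixes g :: 'a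
  assumes g_neg: "g \<in> neg_cone G leq"
begin

lemma g_closed [simp]: "g \<in> carrier G"
  using g_neg by (simp add: neg_cone_def)

lemma one_le_inv_g: "\<one> \<preceq> inv g"
  using g_neg by (simp add: neg_cone_def one_le_inv_iff)

definition trunc :: "nat \<Rightarrow> 'a" where
  "trunc j = inv g \<curlywedge> s [^] j"

definition normal_length :: nat where
  "normal_length = (LEAST i. inv g \<preceq> s [^] i)"

definition normal_factor :: "nat \<Rightarrow> 'a" where
  "normal_factor i = trunc i \<otimes> inv (trunc (Suc i))"

definition normal_factors :: "'a list" where
  "normal_factors = map normal_factor [0..<normal_length]"

lemma trunc_closed [simp]: "trunc j \<in> carrier G"
  by (simp add: trunc_def)

lemma trunc_0: "trunc 0 = \<one>"
  using one_le_inv_g meet_commute[of "inv g" \<one>] meet_absorb[of \<one> "inv g"] by (simp add: trunc_def)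

lemma trunc_Suc: "trunc (Suc j) = inv g \<curlywedge> (s \<otimes> trunc j)"
proof -
  have "inv g \<preceq> s \<otimes> inv g"
    using le_mult_right[OF one_closed s_closed _ one_le_s, of "inv g"] by simp
  moreover have "s \<otimes> trunc j = (s \<otimes> inv g) \<curlywedge> s [^] Suc j"
    using left_meet_hom_s unfolding trunc_def left_meet_hom_def
    by (simp add: nat_pow_Suc2[OF s_closed, symmetric])
  ultimately show ?thesis
    using meet_assoc[of "inv g" "s \<otimes> inv g" "s [^] Suc j"] meet_absorb[of "inv g" "s \<otimes> inv g"]
    by (simp add: trunc_def)
qed

lemma trunc_mono:
  assumes "i \<le> j"
  shows "trunc i \<preceq> trunc j"
proof -
  have "trunc i \<preceq> s [^] j"
    using le_trans[of "trunc i" "s [^] i" "s [^] j"] pow_mono[OF assms] meet_le_right[of "inv g" "s [^] i"]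
    by (simp add: trunc_def)
  then show ?thesis
    using meet_greatest[of "inv g" "s [^] j" "trunc i"] meet_le_left[of "inv g" "s [^] i"]
    by (simp add: trunc_def)
qed

lemma trunc_eq_inv_g_iff: "trunc j = inv g \<longleftrightarrow> inv g \<preceq> s [^] j"
  by (simp add: trunc_def meet_eq_left_iff)

lemma inv_g_le_pow_normal_length: "inv g \<preceq> s [^] normal_length"
  unfolding normal_length_def using ex_le_pow[OF inv_closed[OF g_closed]] by (rule LeastI_ex)

lemma trunc_eq_inv_g:
  assumes "normal_length \<le> j"
  shows "trunc j = inv g"
proof -
  have "inv g \<preceq> s [^] j"
    using le_trans[OF _ _ _ inv_g_le_pow_normal_length pow_mono[OF assms]] by simp
  then show ?thesis
    by (simp add: trunc_eq_inv_g_iff)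
qed

lemma trunc_less_trunc_Suc:
  assumes "i < normal_length"
  shows "trunc i \<noteq> trunc (Suc i)"
proof
  assume eq: "trunc i = trunc (Suc i)"
  have "trunc j = trunc i" if "i \<le> j" for j
    using that
  proof (induction j rule: dec_induct)
    case (step j)
    have "trunc (Suc j) = inv g \<curlywedge> (s \<otimes> trunc i)"
      by (simp only: trunc_Suc step.IH)
    also have "\<dots> = trunc i"
      by (simp only: trunc_Suc[of i, symmetric] eq[symmetric])
    finally show ?case .
  qed simp
  then have "trunc i = inv g"
    using trunc_eq_inv_g[of "max i normal_length"] by (metis max.cobounded1 max.cobounded2)
  then have "normal_length \<le> i"
    unfolding normal_length_def trunc_eq_inv_g_iff by (rule Least_le)
  with assms show False by simp
qed

lemma normal_factor_mem_unit_interval: "normal_factor i \<in> unit_interval"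
proof -
  have "trunc i \<preceq> trunc (Suc i)"
    by (simp add: trunc_mono)
  moreover have "trunc (Suc i) \<preceq> s \<otimes> trunc i"
    by (simp add: trunc_Suc meet_le_right)
  ultimately show ?thesis
    using le_iff_mult_inv_le_one[of "trunc i" "trunc (Suc i)"]
      le_iff_one_le_mult_inv[of "trunc (Suc i)" "s \<otimes> trunc i"]
    by (simp add: normal_factor_def unit_interval_iff m_assoc)
qed

lemma normal_factor_ne_one:
  assumes "i < normal_length"
  shows "normal_factor i \<noteq> \<one>"
proof
  assume "normal_factor i = \<one>"
  then have "trunc i \<otimes> inv (trunc (Suc i)) \<otimes> trunc (Suc i) = trunc (Suc i)"
    by (simp add: normal_factor_def)
  then have "trunc i = trunc (Suc i)"
    by (simp add: m_assoc)
  with trunc_less_trunc_Suc[OF assms] show False ..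
qed

lemma normal_pair_normal_factor: "normal_pair (normal_factor i) (normal_factor (Suc i))"
proof -
  have "s \<otimes> trunc i \<preceq> s \<otimes> trunc (Suc i)"
    using left_meet_hom_mono[OF left_meet_hom_s] trunc_mono[of i "Suc i"] by simp
  then have "(s \<otimes> trunc (Suc i)) \<curlywedge> (s \<otimes> trunc i) = s \<otimes> trunc i"
    using meet_commute[of "s \<otimes> trunc i"] meet_absorb[of "s \<otimes> trunc i"] by simp
  then have "trunc (Suc (Suc i)) \<curlywedge> (s \<otimes> trunc i) = inv g \<curlywedge> (s \<otimes> trunc i)"
    using meet_assoc[of "inv g" "s \<otimes> trunc (Suc i)" "s \<otimes> trunc i"] by (simp add: trunc_Suc[of "Suc i"])
  also have "\<dots> = trunc (Suc i)"
    by (rule trunc_Suc[symmetric])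
  finally have meet: "trunc (Suc (Suc i)) \<curlywedge> (s \<otimes> trunc i) = trunc (Suc i)" .
  have "inv (normal_factor (Suc i)) = trunc (Suc (Suc i)) \<otimes> inv (trunc (Suc i))"
    by (simp add: normal_factor_def inv_mult_group)
  moreover have "s \<otimes> normal_factor i = s \<otimes> trunc i \<otimes> inv (trunc (Suc i))"
    by (simp add: normal_factor_def m_assoc)
  ultimately show ?thesis
    using meet meet_mult_right[of "trunc (Suc (Suc i))" "s \<otimes> trunc i" "inv (trunc (Suc i))"]
    by (simp add: normal_pair_def)
qed

lemma left_normal_fact_normal_factors: "left_normal_fact G leq s g normal_factors"
proof -
  have "lprod G normal_factors = trunc 0 \<otimes> inv (trunc normal_length)"
    using lprod_telescope[of trunc 0 normal_length]
    unfolding normal_factors_def normal_factor_def[abs_def] by simp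
  then have "lprod G normal_factors = g"
    by (simp add: trunc_0 trunc_eq_inv_g)
  moreover have "successively normal_pair normal_factors"
    by (simp add: normal_factors_def successively_map successively_conv_nth normal_pair_normal_factor)
  ultimately show ?thesis
    unfolding left_normal_fact_iff normal_factors_def
    by (auto simp: normal_factor_mem_unit_interval normal_factor_ne_one)
qed

lemma left_normal_fact_inv_lprod_take:
  assumes "left_normal_fact G leq s g hs" "j \<le> length hs"
  shows "inv (lprod G (take j hs)) = trunc j"
  using assms(2)
proof (induction j)
  case 0
  then show ?case by (simp add: trunc_0)
next
  case (Suc j)
  have hs: "set hs \<subseteq> unit_interval" "g = lprod G hs" "successively normal_pair hs"
    using assms(1) left_normal_fact_iff by auto
  then have carrier: "set hs \<subseteq> carrier G"
    by (auto simp: unit_interval_iff)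
  define T where "T = lprod G (take j hs)"
  define D where "D = lprod G (drop j hs)"
  have TD: "T \<in> carrier G" "D \<in> carrier G"
    using carrier unfolding T_def D_def by (meson lprod_closed set_drop_subset set_take_subset subset_trans)+
  have "successively normal_pair (drop j hs)"
    using hs(3) successively_append_iff[of normal_pair "take j hs" "drop j hs"] by simp
  then have "inv D \<curlywedge> s = inv (hs ! j)"
    unfolding D_def using Suc.prems hs(1) inv_lprod_meet_s[of "drop j hs"]
    by (simp add: hd_drop_conv_nth subset_trans[OF set_drop_subset])
  have "trunc (Suc j) = inv g \<curlywedge> (s \<otimes> inv T)"
    using Suc by (simp add: trunc_Suc T_def)
  also have "\<dots> = (inv D \<otimes> inv T) \<curlywedge> (s \<otimes> inv T)"
    using hs(2) carrier TD lprod_take_drop[of hs j] by (simp add: T_def D_def inv_mult_group)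
  also have "\<dots> = inv (hs ! j) \<otimes> inv T"
    using TD meet_mult_right[of "inv D" s "inv T"] \<open>inv D \<curlywedge> s = inv (hs ! j)\<close> by simp
  also have "\<dots> = inv (lprod G (take (Suc j) hs))"
  proof -
    have "hs ! j \<in> carrier G"
      using Suc.prems carrier by (simp add: subset_code(1))
    then show ?thesis
      using Suc.prems carrier TD lprod_take_Suc[of hs j] by (simp add: T_def inv_mult_group)
  qed
  finally show ?case ..
qed

lemma left_normal_fact_nth:
  assumes "left_normal_fact G leq s g hs" "j < length hs"
  shows "hs ! j = normal_factor j"
proof -
  have carrier: "set hs \<subseteq> carrier G"
    using assms(1) by (auto simp: left_normal_fact_iff unit_interval_iff)
  have prefix: "lprod G (take k hs) = inv (trunc k)" if "k \<le> length hs" for k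
  proof -
    have "lprod G (take k hs) \<in> carrier G"
      using carrier by (simp add: subset_trans[OF set_take_subset])
    then show ?thesis
      using left_normal_fact_inv_lprod_take[OF assms(1) that] by (metis inv_inv)
  qed
  have "hs ! j \<in> carrier G"
    using assms(2) carrier by (simp add: subset_code(1))
  then have "hs ! j = inv (lprod G (take j hs)) \<otimes> lprod G (take (Suc j) hs)"
    using assms(2) carrier lprod_take_Suc[of hs j]
    by (simp add: m_assoc[symmetric] subset_trans[OF set_take_subset])
  then show ?thesis
    using assms(2) prefix[of j] prefix[of "Suc j"] by (simp add: normal_factor_def)
qed

lemma left_normal_fact_length:
  assumes "left_normal_fact G leq s g hs"
  shows "length hs = normal_length"
proof -
  have hs: "g = lprod G hs" "\<forall>h\<in>set hs. h \<noteq> \<one>"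
    using assms left_normal_fact_iff by auto
  have "trunc (length hs) = inv g"
    using left_normal_fact_inv_lprod_take[OF assms, of "length hs"] hs by simp
  then have "normal_length \<le> length hs"
    unfolding normal_length_def trunc_eq_inv_g_iff by (rule Least_le)
  moreover have "\<not> normal_length < length hs"
  proof
    assume less: "normal_length < length hs"
    then have "hs ! normal_length = \<one>"
      using left_normal_fact_nth[OF assms less] trunc_eq_inv_g[of normal_length] trunc_eq_inv_g[of "Suc normal_length"]
      by (simp add: normal_factor_def)
    with less hs show False by auto
  qed
  ultimately show ?thesis by simp
qed

lemma left_normal_fact_unique: "left_normal_fact G leq s g hs \<Longrightarrow> hs = normal_factors"
  by (rule nth_equalityI)
    (simp_all add: left_normal_fact_length left_normal_fact_nth normal_factors_def)

lemma cvee_pow_eq_inv_trunc: "cvee G leq g (s [^] (- int j)) = inv (trunc j)"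
proof -
  have "inv (s [^] (- int j)) = s [^] j"
    by (simp only: int_pow_neg_int[OF s_closed] inv_inv[OF nat_pow_closed[OF s_closed]])
  then show ?thesis
    unfolding cvee_def trunc_def by (simp only:)
qed

lemma normal_length_eq_Least: "normal_length = (LEAST i. s [^] (- int i) \<preceq> g)"
proof -
  have "s [^] (- int i) \<preceq> g \<longleftrightarrow> inv g \<preceq> s [^] i" for i
    using inv_pow_le_iff[OF g_closed, of i] by (simp only: int_pow_neg_int[OF s_closed])
  then show ?thesis
    unfolding normal_length_def by simp
qed

lemma left_normal_fact_nth_cvee:
  assumes "left_normal_fact G leq s g hs" "i \<in> {1..normal_length}"
  shows "hs ! (i - 1) = inv (cvee G leq g (s [^] (- int (i - 1)))) \<otimes> cvee G leq g (s [^] (- int i))"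
proof -
  obtain j where i: "i = Suc j"
    using assms(2) by (cases i) auto
  then have "j < length hs"
    using assms(2) left_normal_fact_length[OF assms(1)] by simp
  then have "hs ! j = trunc j \<otimes> inv (trunc (Suc j))"
    using left_normal_fact_nth[OF assms(1)] by (simp add: normal_factor_def)
  then show ?thesis
    unfolding i by (simp only: diff_Suc_1 cvee_pow_eq_inv_trunc inv_inv trunc_closed)
qed

end

lemma strong_unit_lgroup_negI:
  assumes "right_lgroup G leq" "strong_order_unit G leq s" "g \<in> neg_cone G leq"
  shows "strong_unit_lgroup_neg G leq s g"
proof -
  have "group G"
    using assms(1) by (simp add: right_lgroup_def)
  with assms show ?thesis
    unfolding strong_unit_lgroup_neg_def strong_unit_lgroup_def right_lgroup_on_def
      strong_unit_lgroup_neg_axioms_def strong_unit_lgroup_axioms_def right_lgroup_on_axioms_def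
    by blast
qed

theorem mainTheorem2:
  fixes G :: "('a, 'b) monoid_scheme" and leq :: "'a \<Rightarrow> 'a \<Rightarrow> bool" and s g :: 'a
  assumes "right_lgroup G leq"
    and "strong_order_unit G leq s"
    and "g \<in> neg_cone G leq"
  defines "k \<equiv> LEAST i::nat. leq (s [^]\<^bsub>G\<^esub> (- int i)) g"
  shows "(\<exists>!hs. left_normal_fact G leq s g hs) \<and>
         (\<forall>hs. left_normal_fact G leq s g hs \<longrightarrow>
            length hs = k \<and>
            (\<forall>i\<in>{1..k}. hs ! (i - 1) =
               inv\<^bsub>G\<^esub> (cvee G leq g (s [^]\<^bsub>G\<^esub> (- int (i - 1))))
                 \<otimes>\<^bsub>G\<^esub> cvee G leq g (s [^]\<^bsub>G\<^esub> (- int i))))"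
proof -
  interpret strong_unit_lgroup_neg G leq s g
    using assms(1-3) by (rule strong_unit_lgroup_negI)
  have "k = normal_length"
    unfolding k_def normal_length_eq_Least ..
  moreover have "\<exists>!hs. left_normal_fact G leq s g hs"
    using left_normal_fact_normal_factors left_normal_fact_unique by blast
  ultimately show ?thesis
    using left_normal_fact_length left_normal_fact_nth_cvee by blast
qed

end
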